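(* Let $\mathbb{M}\in\{\mathbb{N},\mathbb{Z}\}$, let $F:A^{\mathbb{M}}\to A^{\mathbb{M}}$ be a cellular automaton that is not nilpotent, and let $s\in A$ be a spreading state of $F$. Then there exists $c\in A^{\mathbb{M}}$ such that $F^n(c)_j\neq s$ for all $n\in\mathbb{N}$ and all $j\in\mathbb{M}$.
   Context: A CA is a continuous shift-commuting map on the full shift $A^{\mathbb{M}}$ over a finite alphabet, given by a local rule. A state $s$ is spreading if the local rule maps every neighborhood pattern containing $s$ to $s$. $F$ is nilpotent if there is a state $q$ with $F({}^\omega q^\omega)={}^\omega q^\omega$ (constant configuration) such that for every $c$ there is $n$ with $F^n(c)={}^\omega q^\omega$. *)

theory Defs
  imports Main
begin

definition ca_global :: "'m::plus list \<Rightarrow> ('a list \<Rightarrow> 'a) \<Rightarrow> ('m \<Rightarrow> 'a) \<Rightarrow> ('m \<Rightarrow> 'a)" where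
  "ca_global N f c = (\<lambda>j. f (map (\<lambda>k. c (j + k)) N))"

definition spreading :: "'m list \<Rightarrow> ('a list \<Rightarrow> 'a) \<Rightarrow> 'a \<Rightarrow> bool" where
  "spreading N f s \<longleftrightarrow> (\<forall>w. length w = length N \<longrightarrow> s \<in> set w \<longrightarrow> f w = s)"

definition nilpotent :: "(('m \<Rightarrow> 'a) \<Rightarrow> ('m \<Rightarrow> 'a)) \<Rightarrow> bool" where
  "nilpotent F \<longleftrightarrow> (\<exists>q. F (\<lambda>_. q) = (\<lambda>_. q) \<and> (\<forall>c. \<exists>n. (F ^^ n) c = (\<lambda>_. q)))"

end

theory Submission imports Defs "HOL-Analysis.Function_Topology" begin

text \<open>
  Shifting all offsets conjugates F with a time-dependent translation, and a one-sided automaton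
  is the restriction of the two-sided one with the same offsets, so it suffices to treat
  \<open>\<int>\<close> with \<open>0 \<in> N\<close>. Then an \<open>s\<close> at cell \<open>j + k\<^sub>1 + \<dots> + k\<^sub>m\<close> (all \<open>k\<^sub>i \<in> N\<close>) at time
  \<open>n\<close> forces an \<open>s\<close> at cell \<open>j\<close> at every time \<open>\<ge> n + m\<close>. As F fixes the all-\<open>s\<close> configuration
  but is not nilpotent, some \<open>c\<^sub>0\<close> never becomes all-\<open>s\<close>. If \<open>g\<close> is the gcd of the offsets, the
  sums of offsets contain arithmetic progressions of difference \<open>g\<close> of any length; pulling
  \<open>c\<^sub>0\<close> back along a map that commutes with the offsets and collapses \<open>[-K, K]\<close> onto such a
  progression ending at a non-\<open>s\<close> cell of \<open>F\<^sup>T c\<^sub>0\<close> gives a configuration free of \<open>s\<close> on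
  \<open>[-K, K]\<close> up to time \<open>K\<close>. Compactness of \<open>A\<^sup>\<int>\<close> yields one configuration that avoids \<open>s\<close>
  forever.
\<close>

definition locally_determined :: "(('i \<Rightarrow> 'a) \<Rightarrow> bool) \<Rightarrow> bool" where
  "locally_determined P \<longleftrightarrow> (\<exists>S. finite S \<and> (\<forall>d d'. (\<forall>i\<in>S. d i = d' i) \<longrightarrow> P d = P d'))"

lemma closedin_locally_determined:
  fixes P :: "('i \<Rightarrow> 'a) \<Rightarrow> bool"
  assumes "locally_determined P"
  shows "closedin (product_topology (\<lambda>_. discrete_topology UNIV) UNIV) {d. P d}"
proof -
  let ?X = "product_topology (\<lambda>_::'i. discrete_topology (UNIV::'a set)) UNIV"
  obtain S where S: "finite S" "\<And>d d'. \<forall>i\<in>S. d i = d' i \<Longrightarrow> P d = P d'"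
    using assms unfolding locally_determined_def by blast
  have "openin ?X (- {d. P d})"
  proof (subst openin_subopen, intro ballI)
    fix d assume d: "d \<in> - {d. P d}"
    define T where "T = PiE UNIV (\<lambda>i. if i \<in> S then {d i} else (UNIV::'a set))"
    have "openin ?X T"
      unfolding T_def by (subst openin_PiE_gen) (auto intro: finite_subset[OF _ S(1)])
    moreover have "T \<subseteq> - {d. P d}"
    proof
      fix d' assume "d' \<in> T"
      then have "\<forall>i. d' i \<in> (if i \<in> S then {d i} else UNIV)"
        unfolding T_def by (auto simp: PiE_def Pi_def)
      then have "\<forall>i\<in>S. d i = d' i" by (metis singletonD)
      then show "d' \<in> - {d. P d}" using d S(2) by auto
    qed
    moreover have "d \<in> T" unfolding T_def by auto
    ultimately show "\<exists>T. openin ?X T \<and> d \<in> T \<and> T \<subseteq> - {d. P d}" by blast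
  qed
  then show ?thesis unfolding closedin_def by (simp add: Compl_eq_Diff_UNIV)
qed

lemma locally_determined_chain_common_witness:
  fixes P :: "nat \<Rightarrow> ('i \<Rightarrow> 'a::finite) \<Rightarrow> bool"
  assumes local: "\<And>K. locally_determined (P K)"
    and decreasing: "\<And>K d. P (Suc K) d \<Longrightarrow> P K d"
    and nonempty: "\<And>K. \<exists>d. P K d"
  shows "\<exists>e. \<forall>K. P K e"
proof -
  let ?X = "product_topology (\<lambda>_::'i. discrete_topology (UNIV::'a set)) UNIV"
  have compact: "compact_space ?X"
    by (simp add: compact_space_product_topology compact_space_discrete_topology)
  have antimono: "P K d" if "P K' d" "K \<le> K'" for K K' d
    using that(2,1) by (induction rule: dec_induct) (auto intro: decreasing)
  let ?U = "range (\<lambda>K. {d. P K d})"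
  have "\<Inter>?U \<noteq> {}"
  proof (rule compact[unfolded compact_space_fip, rule_format], intro conjI allI impI ballI)
    show "C \<in> ?U \<Longrightarrow> closedin ?X C" for C
      using closedin_locally_determined[OF local] by auto
    fix F assume F: "finite F \<and> F \<subseteq> ?U"
    then obtain Ks where Ks: "finite Ks" "F = (\<lambda>K. {d. P K d}) ` Ks"
      by (meson finite_subset_image)
    obtain d where "P (Max (insert 0 Ks)) d" using nonempty by blast
    then have "d \<in> \<Inter>F" using Ks antimono by auto
    then show "\<Inter>F \<noteq> {}" by blast
  qed
  then show ?thesis by auto
qed

lemma ca_global_comp:
  assumes "\<And>y k. k \<in> set N \<Longrightarrow> \<phi> (y + k) = \<phi> y + k"
  shows "ca_global N f (c \<circ> \<phi>) = ca_global N f c \<circ> \<phi>"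
  unfolding ca_global_def using assms by (auto intro!: ext arg_cong[where f=f])

lemma ca_global_iterate_comp:
  assumes "\<And>y k. k \<in> set N \<Longrightarrow> \<phi> (y + k) = \<phi> y + k"
  shows "(ca_global N f ^^ n) (c \<circ> \<phi>) = (ca_global N f ^^ n) c \<circ> \<phi>"
proof (induction n)
  case (Suc n)
  have "(ca_global N f ^^ Suc n) (c \<circ> \<phi>) = ca_global N f ((ca_global N f ^^ n) (c \<circ> \<phi>))"
    by simp
  also have "\<dots> = ca_global N f ((ca_global N f ^^ n) c \<circ> \<phi>)" by (simp only: Suc.IH)
  also have "\<dots> = ca_global N f ((ca_global N f ^^ n) c) \<circ> \<phi>" by (rule ca_global_comp[OF assms])
  also have "\<dots> = (ca_global N f ^^ Suc n) c \<circ> \<phi>" by simp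
  finally show ?case .
qed simp

lemma ca_global_spreading:
  assumes "spreading N f s" "k \<in> set N" "c (j + k) = s"
  shows "ca_global N f c j = s"
proof -
  have "s \<in> set (map (\<lambda>k. c (j + k)) N)" using assms(2,3) by force
  then show ?thesis using assms(1) unfolding spreading_def ca_global_def by simp
qed

lemma ca_global_iterate_spreading_sum_list:
  fixes N :: "'m::monoid_add list"
  assumes sp: "spreading N f s" and ks: "set ks \<subseteq> set N"
    and "(ca_global N f ^^ n) c (j + sum_list ks) = s"
  shows "(ca_global N f ^^ (n + length ks)) c j = s"
  using ks assms(3)
proof (induction ks arbitrary: j)
  case Nil then show ?case by simp
next
  case (Cons k ks)
  have "k \<in> set N" using Cons.prems(1) by simp
  moreover have "(ca_global N f ^^ (n + length ks)) c (j + k) = s"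
    using Cons by (simp add: add.assoc)
  ultimately have "ca_global N f ((ca_global N f ^^ (n + length ks)) c) j = s"
    by (rule ca_global_spreading[OF sp])
  then show ?case by simp
qed

lemma ca_global_iterate_spreading_persists:
  fixes N :: "'m::monoid_add list"
  assumes sp: "spreading N f s" and "0 \<in> set N"
    and "(ca_global N f ^^ n) c j = s" and "n \<le> m"
  shows "(ca_global N f ^^ m) c j = s"
  using assms(4)
proof (induction rule: dec_induct)
  case base
  show ?case by (rule assms(3))
next
  case (step m)
  have "ca_global N f ((ca_global N f ^^ m) c) j = s"
    by (rule ca_global_spreading[OF sp \<open>0 \<in> set N\<close>]) (simp add: step.IH)
  then show ?case by simp
qed

lemma not_nilpotent_obtain_orbit:
  assumes "\<not> nilpotent F" and "F (\<lambda>_. s) = (\<lambda>_. s)"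
  obtains c where "\<And>n. \<exists>j. (F ^^ n) c j \<noteq> s"
proof -
  have "\<not> (\<forall>c. \<exists>n. (F ^^ n) c = (\<lambda>_. s))"
    using assms unfolding nilpotent_def by blast
  then obtain c where c: "\<And>n. (F ^^ n) c \<noteq> (\<lambda>_. s)" by blast
  have "\<exists>j. (F ^^ n) c j \<noteq> s" for n
    using c[of n] by (auto simp: fun_eq_iff)
  then show ?thesis by (rule that)
qed

definition offset_sums :: "'m::monoid_add list \<Rightarrow> 'm set" where
  "offset_sums N = {sum_list ks | ks. set ks \<subseteq> set N}"

lemma offset_sums_0: "0 \<in> offset_sums N"
  unfolding offset_sums_def by (auto intro!: exI[of _ "[]"])

lemma offset_sums_add: "a \<in> offset_sums N \<Longrightarrow> b \<in> offset_sums N \<Longrightarrow> a + b \<in> offset_sums N"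
  unfolding offset_sums_def by (auto, metis le_sup_iff set_append sum_list_append)

lemma offset_sums_of_nat_mult: "a \<in> offset_sums N \<Longrightarrow> int m * a \<in> offset_sums N"
  by (induction m) (auto simp: offset_sums_0 offset_sums_add distrib_right)

lemma offset_sums_Cons: "a \<in> offset_sums N \<Longrightarrow> a \<in> offset_sums (k # N)"
  unfolding offset_sums_def by auto

lemma offset_sums_member: "k \<in> set N \<Longrightarrow> k \<in> offset_sums N"
  unfolding offset_sums_def by (auto intro!: exI[of _ "[k]"])

lemma offset_sums_gcd_difference:
  fixes N :: "int list"
  shows "\<exists>g x y. g \<ge> 0 \<and> (\<forall>k\<in>set N. g dvd k) \<and> x \<in> offset_sums N \<and> y \<in> offset_sums N \<and> x - y = g"
proof (induction N)
  case Nil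
  show ?case by (intro exI[of _ 0]) (simp add: offset_sums_0)
next
  case (Cons k N)
  then obtain G x y where IH: "G \<ge> 0" "\<forall>k\<in>set N. G dvd k"
      "x \<in> offset_sums N" "y \<in> offset_sums N" "x - y = G"
    by blast
  obtain u v where uv: "u * k + v * G = gcd k G" using bezout_int by blast
  \<comment> \<open>split the Bezout coefficients into their nonnegative parts\<close>
  define x' where "x' = int (nat u) * k + int (nat v) * x + int (nat (-v)) * y"
  define y' where "y' = int (nat (-u)) * k + int (nat v) * y + int (nat (-v)) * x"
  have sums: "x \<in> offset_sums (k#N)" "y \<in> offset_sums (k#N)" "k \<in> offset_sums (k#N)"
    using IH(3,4) by (simp_all add: offset_sums_Cons offset_sums_member)
  have "x' \<in> offset_sums (k#N)" "y' \<in> offset_sums (k#N)"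
    unfolding x'_def y'_def by (intro offset_sums_add offset_sums_of_nat_mult sums)+
  moreover have "x' - y' = gcd k G"
  proof -
    have "x' - y' = u * k + v * (x - y)"
      unfolding x'_def y'_def by (simp add: algebra_simps)
    then show ?thesis using uv IH(5) by simp
  qed
  moreover have "\<forall>k'\<in>set (k#N). gcd k G dvd k'"
    using IH(2) by (auto intro: dvd_trans[OF gcd_dvd2])
  ultimately show ?case using gcd_ge_0_int[of k G] by blast
qed

lemma offset_sums_progression:
  assumes "x \<in> offset_sums N" "y \<in> offset_sums N" "x - y = g" "t \<le> m"
  shows "int m * y + int t * g \<in> offset_sums N"
proof -
  have "int t * x + int (m - t) * y \<in> offset_sums N"
    using assms by (intro offset_sums_add offset_sums_of_nat_mult)
  moreover have "int t * x + int (m - t) * y = int m * y + int t * g"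
    using assms(3,4) by (simp add: of_nat_diff algebra_simps)
  ultimately show ?thesis by simp
qed

lemma spreading_reaches_back_uniformly:
  fixes N :: "'m::monoid_add list"
  assumes sp: "spreading N f s" and "0 \<in> set N" and "finite A" and "A \<subseteq> offset_sums N"
  shows "\<exists>M. \<forall>a\<in>A. \<forall>n c j. (ca_global N f ^^ n) c (j + a) = s \<longrightarrow> (ca_global N f ^^ (n + M)) c j = s"
proof -
  have decompose: "\<forall>a\<in>A. \<exists>ks. set ks \<subseteq> set N \<and> sum_list ks = a"
    using \<open>A \<subseteq> offset_sums N\<close> unfolding offset_sums_def by blast
  obtain ks where ks: "\<And>a. a \<in> A \<Longrightarrow> set (ks a) \<subseteq> set N \<and> sum_list (ks a) = a"
    using bchoice[OF decompose] by blast
  define M where "M = Max ((\<lambda>a. length (ks a)) ` A)"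
  have "(ca_global N f ^^ (n + M)) c j = s"
    if "a \<in> A" "(ca_global N f ^^ n) c (j + a) = s" for a n c j
  proof (rule ca_global_iterate_spreading_persists[OF sp \<open>0 \<in> set N\<close>])
    show "(ca_global N f ^^ (n + length (ks a))) c j = s"
      using ca_global_iterate_spreading_sum_list[OF sp, where ks = "ks a" and n = n and c = c and j = j]
        ks[OF that(1)] that(2)
      by simp
    show "n + length (ks a) \<le> n + M"
      unfolding M_def using \<open>finite A\<close> \<open>a \<in> A\<close> by simp
  qed
  then show ?thesis by blast
qed

text \<open>
  The map is \<open>z \<mapsto> b + g \<lfloor>(z + K) / g\<rfloor>\<close>; for \<open>g = 0\<close> it is constant, as \<open>x div 0 = 0\<close>,
  and then all offsets vanish.
\<close>

lemma window_collapse: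
  fixes g b :: int and N :: "int list"
  assumes "g \<ge> 0" and "\<forall>k\<in>set N. g dvd k"
  shows "\<exists>\<phi>. (\<forall>z k. k \<in> set N \<longrightarrow> \<phi> (z + k) = \<phi> z + k)
            \<and> (\<forall>z. \<bar>z\<bar> \<le> int K \<longrightarrow> (\<exists>t\<le>2 * K. \<phi> z = b + int t * g))"
proof -
  define \<phi> where "\<phi> z = b + g * ((z + int K) div g)" for z
  have "\<phi> (z + k) = \<phi> z + k" if k: "k \<in> set N" for z k
  proof -
    obtain r where r: "k = g * r" using assms(2) k by (meson dvdE)
    show ?thesis
    proof (cases "g = 0")
      case False
      have "(z + k + int K) div g = ((z + int K) + r * g) div g" by (simp add: r algebra_simps)
      also have "\<dots> = r + (z + int K) div g" using False by (rule div_mult_self1)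
      finally have "(z + k + int K) div g = r + (z + int K) div g" .
      then show ?thesis unfolding \<phi>_def by (simp add: r algebra_simps)
    qed (simp add: \<phi>_def r)
  qed
  moreover have "\<exists>t\<le>2 * K. \<phi> z = b + int t * g" if z: "\<bar>z\<bar> \<le> int K" for z
  proof -
    let ?q = "(z + int K) div g"
    have nonneg: "0 \<le> z + int K" and bound: "z + int K \<le> int (2 * K)" using z by auto
    have "0 \<le> ?q \<and> ?q \<le> z + int K"
    proof (cases "g = 0")
      case False
      then have "0 < g" using assms(1) by simp
      then show ?thesis
        using nonneg zdiv_mono2[where a = "z + int K" and b = g and b' = 1]
        by (simp add: pos_imp_zdiv_nonneg_iff)
    qed (simp add: nonneg)
    then have "nat ?q \<le> 2 * K \<and> \<phi> z = b + int (nat ?q) * g"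
      using bound unfolding \<phi>_def by (auto simp: nat_le_iff)
    then show ?thesis by blast
  qed
  ultimately show ?thesis by blast
qed

lemma ca_global_iterate_cong:
  fixes N :: "int list"
  assumes "\<forall>y. \<bar>y - x\<bar> \<le> int n * sum_list (map abs N) \<longrightarrow> d y = d' y"
  shows "(ca_global N f ^^ n) d x = (ca_global N f ^^ n) d' x"
  using assms
proof (induction n arbitrary: x)
  case 0 then show ?case by simp
next
  case (Suc n)
  let ?R = "sum_list (map abs N)"
  have "(ca_global N f ^^ n) d (x + k) = (ca_global N f ^^ n) d' (x + k)" if k: "k \<in> set N" for k
  proof (rule Suc.IH, intro allI impI)
    fix y assume y: "\<bar>y - (x + k)\<bar> \<le> int n * ?R"
    have "\<bar>k\<bar> \<le> ?R" using k by (intro member_le_sum_list) auto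
    then have "\<bar>y - x\<bar> \<le> int (Suc n) * ?R" using y by (simp add: algebra_simps)
    then show "d y = d' y" using Suc.prems by blast
  qed
  then show ?case
    unfolding funpow.simps comp_def ca_global_def by (intro arg_cong[where f=f] map_cong) auto
qed

definition avoids_upto :: "((int \<Rightarrow> 'a) \<Rightarrow> (int \<Rightarrow> 'a)) \<Rightarrow> 'a \<Rightarrow> nat \<Rightarrow> (int \<Rightarrow> 'a) \<Rightarrow> bool" where
  "avoids_upto F s K d \<longleftrightarrow> (\<forall>n\<le>K. \<forall>z. \<bar>z\<bar> \<le> int K \<longrightarrow> (F ^^ n) d z \<noteq> s)"

lemma locally_determined_avoids_upto:
  fixes N :: "int list" and f :: "'a list \<Rightarrow> 'a"
  shows "locally_determined (avoids_upto (ca_global N f) s K)"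
  unfolding locally_determined_def
proof (intro exI conjI allI impI)
  let ?R = "sum_list (map abs N)"
  let ?B = "int K + int K * ?R"
  have R: "0 \<le> ?R" by (induction N) auto
  show "finite {i::int. \<bar>i\<bar> \<le> ?B}"
    by (rule finite_subset[of _ "{-?B..?B}"]) auto
  fix d d' :: "int \<Rightarrow> 'a"
  assume agree: "\<forall>i\<in>{i. \<bar>i\<bar> \<le> ?B}. d i = d' i"
  have "(ca_global N f ^^ n) d z = (ca_global N f ^^ n) d' z" if "n \<le> K" "\<bar>z\<bar> \<le> int K" for n z
  proof (rule ca_global_iterate_cong, intro allI impI)
    fix y assume "\<bar>y - z\<bar> \<le> int n * ?R"
    moreover have "int n * ?R \<le> int K * ?R"
      using that(1) R by (simp add: mult_right_mono)
    ultimately show "d y = d' y" using that agree by auto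
  qed
  then show "avoids_upto (ca_global N f) s K d = avoids_upto (ca_global N f) s K d'"
    unfolding avoids_upto_def by auto
qed

lemma exists_avoids_upto:
  fixes N :: "int list"
  assumes "0 \<in> set N" and "\<not> nilpotent (ca_global N f)" and sp: "spreading N f s"
  shows "\<exists>d. avoids_upto (ca_global N f) s K d"
proof -
  let ?F = "ca_global N f"
  have "?F (\<lambda>_. s) = (\<lambda>_. s)"
    by (intro ext ca_global_spreading[OF sp \<open>0 \<in> set N\<close>]) simp
  then obtain c0 where c0: "\<And>n. \<exists>j. (?F ^^ n) c0 j \<noteq> s"
    using not_nilpotent_obtain_orbit[OF assms(2)] by blast
  obtain g x y where g: "g \<ge> 0" "\<forall>k\<in>set N. g dvd k" and
    xy: "x \<in> offset_sums N" "y \<in> offset_sums N" "x - y = g"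
    using offset_sums_gcd_difference by blast
  define A where "A = (\<lambda>t. int (2 * K) * y + int t * g) ` {..2 * K}"
  have "finite A" unfolding A_def by simp
  have "A \<subseteq> offset_sums N"
    unfolding A_def by (intro image_subsetI offset_sums_progression[OF xy]) simp
  obtain M where M: "\<forall>a\<in>A. \<forall>n c j. (?F ^^ n) c (j + a) = s \<longrightarrow> (?F ^^ (n + M)) c j = s"
    using spreading_reaches_back_uniformly[OF sp \<open>0 \<in> set N\<close> \<open>finite A\<close> \<open>A \<subseteq> offset_sums N\<close>]
    by blast
  obtain j where j: "(?F ^^ (K + M)) c0 j \<noteq> s" using c0 by blast
  obtain \<phi> where \<phi>: "\<And>z k. k \<in> set N \<Longrightarrow> \<phi> (z + k) = \<phi> z + k"
    and collapse: "\<And>z. \<bar>z\<bar> \<le> int K \<Longrightarrow> \<exists>t\<le>2 * K. \<phi> z = j + int (2 * K) * y + int t * g"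
    using window_collapse[OF g, of K "j + int (2 * K) * y"] by blast
  have window: "\<exists>a\<in>A. \<phi> z = j + a" if z: "\<bar>z\<bar> \<le> int K" for z
  proof -
    obtain t where t: "t \<le> 2 * K" "\<phi> z = j + int (2 * K) * y + int t * g"
      using collapse[OF z] by blast
    have a: "int (2 * K) * y + int t * g \<in> A"
      unfolding A_def using t(1) by (intro image_eqI[OF refl]) simp
    show ?thesis using t(2) by (intro bexI[OF _ a]) (simp add: add.assoc)
  qed
  have "(?F ^^ n) (c0 \<circ> \<phi>) z \<noteq> s" if n: "n \<le> K" and z: "\<bar>z\<bar> \<le> int K" for n z
  proof
    assume "(?F ^^ n) (c0 \<circ> \<phi>) z = s"
    then have "(?F ^^ n) c0 (\<phi> z) = s" by (simp add: ca_global_iterate_comp[OF \<phi>])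
    moreover obtain a where "a \<in> A" "\<phi> z = j + a" using window[OF z] by blast
    ultimately have "(?F ^^ n) c0 (j + a) = s" "a \<in> A" by simp_all
    then have "(?F ^^ (n + M)) c0 j = s" using M by blast
    then have "(?F ^^ (K + M)) c0 j = s"
      by (rule ca_global_iterate_spreading_persists[OF sp \<open>0 \<in> set N\<close>]) (use n in simp)
    then show False using j by simp
  qed
  then have "avoids_upto ?F s K (c0 \<circ> \<phi>)" unfolding avoids_upto_def by blast
  then show ?thesis by blast
qed

lemma spreading_avoiding_configuration_0_offset:
  fixes N :: "int list" and f :: "'a::finite list \<Rightarrow> 'a"
  assumes "0 \<in> set N" and "\<not> nilpotent (ca_global N f)" and "spreading N f s"
  shows "\<exists>c. \<forall>n j. (ca_global N f ^^ n) c j \<noteq> s"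
proof -
  have "\<exists>e. \<forall>K. avoids_upto (ca_global N f) s K e"
  proof (rule locally_determined_chain_common_witness)
    show "locally_determined (avoids_upto (ca_global N f) s K)" for K
      by (rule locally_determined_avoids_upto)
    show "avoids_upto (ca_global N f) s K d" if "avoids_upto (ca_global N f) s (Suc K) d" for K d
      using that unfolding avoids_upto_def by auto
    show "\<exists>d. avoids_upto (ca_global N f) s K d" for K
      by (rule exists_avoids_upto[OF assms])
  qed
  then obtain e where "\<And>K. avoids_upto (ca_global N f) s K e" by blast
  moreover have "n \<le> max n (nat \<bar>j\<bar>)" "\<bar>j\<bar> \<le> int (max n (nat \<bar>j\<bar>))" for n j
    by auto
  ultimately have "(ca_global N f ^^ n) e j \<noteq> s" for n j
    unfolding avoids_upto_def by blast
  then show ?thesis by blast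
qed

lemma nilpotent_ca_global_Nil: "nilpotent (ca_global [] f)"
  unfolding nilpotent_def ca_global_def
  by (rule exI[of _ "f []"], auto intro!: exI[of _ "Suc 0"])

lemma ca_global_iterate_shift_offsets:
  fixes N :: "int list"
  shows "(ca_global (map (\<lambda>k. k - a) N) f ^^ n) c = (ca_global N f ^^ n) c \<circ> (\<lambda>x. x - int n * a)"
proof (induction n)
  case (Suc n)
  let ?F = "ca_global N f" and ?G = "ca_global (map (\<lambda>k. k - a) N) f"
  have shift: "?G e = ?F e \<circ> (\<lambda>x. x - a)" for e
    unfolding ca_global_def by (auto simp: comp_def algebra_simps)
  have "(?G ^^ Suc n) c = ?G ((?F ^^ n) c \<circ> (\<lambda>x. x - int n * a))"
    using Suc by (simp add: comp_def)
  also have "\<dots> = ?F ((?F ^^ n) c \<circ> (\<lambda>x. x - int n * a)) \<circ> (\<lambda>x. x - a)"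
    by (rule shift)
  also have "?F ((?F ^^ n) c \<circ> (\<lambda>x. x - int n * a)) = ?F ((?F ^^ n) c) \<circ> (\<lambda>x. x - int n * a)"
    by (rule ca_global_comp) (simp add: algebra_simps)
  finally show ?case by (simp add: comp_def algebra_simps)
qed simp

lemma nilpotent_ca_global_shift_offsets:
  fixes N :: "int list"
  assumes "nilpotent (ca_global (map (\<lambda>k. k - a) N) f)"
  shows "nilpotent (ca_global N f)"
proof -
  let ?F = "ca_global N f" and ?G = "ca_global (map (\<lambda>k. k - a) N) f"
  have shifted_constant: "h = (\<lambda>_. q)" if "h \<circ> (\<lambda>x. x - b) = (\<lambda>_. q)" for h :: "int \<Rightarrow> 'a" and b q
  proof
    show "h x = q" for x using fun_cong[OF that, of "x + b"] by simp
  qed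
  obtain q where q: "?G (\<lambda>_. q) = (\<lambda>_. q)" "\<And>c. \<exists>n. (?G ^^ n) c = (\<lambda>_. q)"
    using assms unfolding nilpotent_def by blast
  have "?F (\<lambda>_. q) \<circ> (\<lambda>x. x - a) = ?G (\<lambda>_. q)"
    using ca_global_iterate_shift_offsets[where N = N and n = 1 and c = "\<lambda>_. q"] by simp
  also have "\<dots> = (\<lambda>_. q)" by (rule q(1))
  finally have "?F (\<lambda>_. q) = (\<lambda>_. q)" by (rule shifted_constant)
  moreover have "\<exists>n. (?F ^^ n) c = (\<lambda>_. q)" for c
  proof -
    obtain n where "(?G ^^ n) c = (\<lambda>_. q)" using q(2) by blast
    then have "(?F ^^ n) c \<circ> (\<lambda>x. x - int n * a) = (\<lambda>_. q)"
      by (simp only: ca_global_iterate_shift_offsets)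
    then show ?thesis using shifted_constant by blast
  qed
  ultimately show ?thesis unfolding nilpotent_def by blast
qed

lemma spreading_avoiding_configuration_int:
  fixes N :: "int list" and f :: "'a::finite list \<Rightarrow> 'a"
  assumes "\<not> nilpotent (ca_global N f)" and "spreading N f s"
  shows "\<exists>c. \<forall>n j. (ca_global N f ^^ n) c j \<noteq> s"
proof -
  obtain a N' where "N = a # N'"
    using assms(1) nilpotent_ca_global_Nil by (cases N) auto
  let ?N0 = "map (\<lambda>k. k - a) N"
  have "0 \<in> set ?N0" using \<open>N = a # N'\<close> by simp
  moreover have "\<not> nilpotent (ca_global ?N0 f)"
    using assms(1) nilpotent_ca_global_shift_offsets by blast
  moreover have "spreading ?N0 f s" using assms(2) unfolding spreading_def by simp
  ultimately obtain c where c: "\<And>n j. (ca_global ?N0 f ^^ n) c j \<noteq> s"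
    using spreading_avoiding_configuration_0_offset by blast
  have "(ca_global N f ^^ n) c j \<noteq> s" for n j
    using c[of n "j + int n * a"] ca_global_iterate_shift_offsets[where N = N and n = n and c = c] by simp
  then show ?thesis by blast
qed

lemma ca_global_iterate_of_nat:
  fixes N :: "nat list"
  shows "(ca_global N f ^^ n) (e \<circ> int) = (ca_global (map int N) f ^^ n) e \<circ> int"
  by (induction n) (simp_all add: ca_global_def comp_def)

lemma nilpotent_ca_global_of_nat:
  fixes N :: "nat list"
  assumes "nilpotent (ca_global (map int N) f)"
  shows "nilpotent (ca_global N f)"
proof -
  let ?F = "ca_global N f" and ?G = "ca_global (map int N) f"
  obtain q where q: "?G (\<lambda>_. q) = (\<lambda>_. q)" "\<And>c. \<exists>n. (?G ^^ n) c = (\<lambda>_. q)"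
    using assms unfolding nilpotent_def by blast
  have "?F (\<lambda>_. q) = (\<lambda>_. q)"
    using ca_global_iterate_of_nat[where N = N and n = 1 and e = "\<lambda>_. q"] q(1) by (simp add: comp_def)
  moreover have "\<exists>n. (?F ^^ n) c = (\<lambda>_. q)" for c
  proof -
    obtain n where n: "(?G ^^ n) (c \<circ> nat) = (\<lambda>_. q)" using q(2) by blast
    have "(?F ^^ n) c = (?F ^^ n) ((c \<circ> nat) \<circ> int)" by (simp add: comp_def)
    also have "\<dots> = (?G ^^ n) (c \<circ> nat) \<circ> int" by (rule ca_global_iterate_of_nat)
    also have "\<dots> = (\<lambda>_. q)" using n by (simp add: comp_def)
    finally show ?thesis by blast
  qed
  ultimately show ?thesis unfolding nilpotent_def by blast
qed

lemma spreading_avoiding_configuration_nat: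
  fixes N :: "nat list" and f :: "'a::finite list \<Rightarrow> 'a"
  assumes "\<not> nilpotent (ca_global N f)" and "spreading N f s"
  shows "\<exists>c. \<forall>n j. (ca_global N f ^^ n) c j \<noteq> s"
proof -
  have "\<not> nilpotent (ca_global (map int N) f)"
    using assms(1) nilpotent_ca_global_of_nat by blast
  moreover have "spreading (map int N) f s" using assms(2) unfolding spreading_def by simp
  ultimately obtain e where "\<And>n j. (ca_global (map int N) f ^^ n) e j \<noteq> s"
    using spreading_avoiding_configuration_int by blast
  then have "(ca_global N f ^^ n) (e \<circ> int) j \<noteq> s" for n j
    by (simp add: ca_global_iterate_of_nat)
  then show ?thesis by blast
qed

theorem proposition2p4:
  shows "(\<forall>(N :: nat list) (f :: 'a::finite list \<Rightarrow> 'a) s.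
            \<not> nilpotent (ca_global N f) \<longrightarrow> spreading N f s \<longrightarrow>
            (\<exists>c. \<forall>n j. (ca_global N f ^^ n) c j \<noteq> s))
       \<and> (\<forall>(N :: int list) (f :: 'a::finite list \<Rightarrow> 'a) s.
            \<not> nilpotent (ca_global N f) \<longrightarrow> spreading N f s \<longrightarrow>
            (\<exists>c. \<forall>n j. (ca_global N f ^^ n) c j \<noteq> s))"
  using spreading_avoiding_configuration_nat spreading_avoiding_configuration_int by blast

end
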